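(* Assume the setting and hypothesis of Theorem 1 stated in the context. Let $U=\{U_1,\dots,U_L\}$ be a partition of $[n]$ that is conditionally independent of $Y_{1:n}$ given $(X_{1:n},A_{1:n})$ (e.g. a deterministic function of $(X_{1:n},A_{1:n})$). For $l\in[L]$ let $N_l^0=|U_l\cap I_{A=0}|$ and $\bar U_l=U_l\cup I_{A=1}$. For each $l$ with $N_l^0\ge1$, let $\hat C^l$ be the prediction set $\hat C$ defined below, computed using only the data $\{(X_i,A_i,Y_iA_i):i\in\bar U_l\}$ (i.e. the distinct feature values, the index sets $I_k,I_k^0,I_k^1$, the counts $N_k,N_k^0$ and $N^{(0)}$ are all computed within $\bar U_l$, so that $N^{(0)}$ becomes $N_l^0$). For $i\in I_{A=0}$, let $l_i$ be the unique $l$ with $i\in U_l$ and define $\hat C_U(X_i,i)=\hat C^{l_i}(X_i)$. Then $$\mathbb E\Big[\frac{1}{N^{(0)}}\sum_{i\in I_{A=0}}\mathbf 1\{Y_i\in\hat C_U(X_i,i)\}\ \Big|\ X_{1:n},A_{1:n}\Big]\ge1-\alpha.$$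
   Context: Setting: $(X_i,A_i,Y_i)_{1\le i\le n}$ random with $X_i\in\mathcal X$, $A_i\in\{0,1\}$, $Y_i\in\mathcal Y$; $Y_i$ observed only when $A_i=1$. Let $X'_1,\dots,X'_M$ be the distinct values among the $X_i$, and $I_k=\{i:X_i=X'_k\}$. Hypothesis: conditionally on $(X_{1:n},A_{1:n})$, the joint law of $(Y_1,\dots,Y_n)$ is invariant under every permutation of $[n]$ mapping each $I_k$ to itself. $s:\mathcal X\times\mathcal Y\to\mathbb R$ is a fixed measurable score function, $S_i=s(X_i,Y_i)$. $I_{A=0}=\{i:A_i=0\}$, $I_{A=1}=\{i:A_i=1\}$, $N^{(0)}=|I_{A=0}|$; $I_k^0=\{i\in I_k:A_i=0\}$, $I_k^1=\{i\in I_k:A_i=1\}$, $N_k=|I_k|$, $N_k^0=|I_k^0|$. The base prediction set (for a dataset with $N^{(0)}\ge1$) is $\hat C(x)=\{y: s(x,y)\le Q_{1-\alpha}(\sum_{k}\sum_{i\in I_k^1}\frac{N_k^0}{N^{(0)}N_k}\delta_{S_i}+\frac{1}{N^{(0)}}\sum_k\frac{(N_k^0)^2}{N_k}\delta_{+\infty})\}$, where $Q_{1-\alpha}(P)=\inf\{t:\mathbb P_{T\sim P}(T\le t)\ge1-\alpha\}$ and $\delta_v$ is a point mass. Coverage proportions over an empty set of missing indices are defined as $1$. *)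

theory Defs
  imports "HOL-Probability.Probability" "HOL-Combinatorics.Permutations"
    "HOL-Library.Disjoint_Sets"
begin

definition blk :: "(nat \<Rightarrow> 'x) \<Rightarrow> nat set \<Rightarrow> nat \<Rightarrow> nat set" where
  "blk x D i = {j \<in> D. x j = x i}"

definition blocks :: "(nat \<Rightarrow> 'x) \<Rightarrow> nat set \<Rightarrow> nat set set" where
  "blocks x D = blk x D ` D"

definition n0 :: "(nat \<Rightarrow> bool) \<Rightarrow> nat set \<Rightarrow> nat" where
  "n0 a B = card {j \<in> B. \<not> a j}"

(* Q_{1-alpha} of the discrete distribution
     sum_k sum_{i in I_k^1} N_k^0/(N^(0) N_k) delta_{S_i}
       + (1/N^(0)) sum_k (N_k^0)^2/N_k delta_{+infty},
   all quantities computed within the data index set D.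
   P(T <= t) is the total weight of the atoms <= t. *)
definition qhat :: "real \<Rightarrow> (nat \<Rightarrow> 'x) \<Rightarrow> (nat \<Rightarrow> bool) \<Rightarrow> (nat \<Rightarrow> real) \<Rightarrow> nat set \<Rightarrow> ereal" where
  "qhat \<alpha> x a S D = Inf {t :: ereal. 1 - \<alpha> \<le>
      (\<Sum>i \<in> {i \<in> D. a i \<and> ereal (S i) \<le> t}.
          real (n0 a (blk x D i)) / (real (n0 a D) * real (card (blk x D i))))
    + (if (\<infinity> :: ereal) \<le> t
       then (1 / real (n0 a D)) * (\<Sum>B \<in> blocks x D. real (n0 a B) ^ 2 / real (card B))
       else 0)}"

definition Chat :: "real \<Rightarrow> ('x \<Rightarrow> 'y \<Rightarrow> real) \<Rightarrow> (nat \<Rightarrow> 'x) \<Rightarrow> (nat \<Rightarrow> bool)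
    \<Rightarrow> (nat \<Rightarrow> 'y) \<Rightarrow> nat set \<Rightarrow> 'x \<Rightarrow> 'y set" where
  "Chat \<alpha> s x a y D x0 = {v. ereal (s x0 v) \<le> qhat \<alpha> x a (\<lambda>i. s (x i) (y i)) D}"

definition part_of :: "nat set set \<Rightarrow> nat \<Rightarrow> nat set" where
  "part_of U i = (THE B. B \<in> U \<and> i \<in> B)"

definition ChatU :: "real \<Rightarrow> ('x \<Rightarrow> 'y \<Rightarrow> real) \<Rightarrow> nat \<Rightarrow> (nat \<Rightarrow> 'x) \<Rightarrow> (nat \<Rightarrow> bool)
    \<Rightarrow> nat set set \<Rightarrow> (nat \<Rightarrow> 'y) \<Rightarrow> nat \<Rightarrow> 'y set" where
  "ChatU \<alpha> s n x a U y i = Chat \<alpha> s x a y (part_of U i \<union> {j \<in> {..<n}. a j}) (x i)"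

definition coverU :: "real \<Rightarrow> ('x \<Rightarrow> 'y \<Rightarrow> real) \<Rightarrow> nat \<Rightarrow> (nat \<Rightarrow> 'x) \<Rightarrow> (nat \<Rightarrow> bool)
    \<Rightarrow> nat set set \<Rightarrow> (nat \<Rightarrow> 'y) \<Rightarrow> real" where
  "coverU \<alpha> s n x a U y =
     (if n0 a {..<n} = 0 then 1
      else (1 / real (n0 a {..<n})) *
        (\<Sum>i \<in> {i \<in> {..<n}. \<not> a i}. indicator (ChatU \<alpha> s n x a U y i) (y i)))"

end

theory Submission
  imports Defs
begin

text \<open>
  For a missing index i, Y_i lies in the prediction set built on D iff the weighted mass of
  the observed scores strictly below S_i is smaller than 1 - \<alpha>, the weight of j being
  N_k^0 / (N^(0) N_k) for the block k of j. Counting the unobserved scores of D as well only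
  increases this mass, so coverage dominates the corresponding event for the full data. For
  any weights summing to 1, the points whose strictly-lower mass is below 1 - \<alpha> carry
  total weight at least 1 - \<alpha>; taking expectations, the weighted sum of the full-data
  coverage probabilities is at least 1 - \<alpha>. Exchangeability within the blocks I_k makes
  these probabilities constant on blocks, and the weights N_k^0 / (N^(0) N_k) then turn the
  weighted sum into the average over the missing indices. Summing over the sets of the
  partition U gives the claim.
\<close>

definition mass_below :: "('i \<Rightarrow> real) \<Rightarrow> 'i set \<Rightarrow> ('i \<Rightarrow> real) \<Rightarrow> 'i \<Rightarrow> real" where
  "mass_below w J S i = (\<Sum>j \<in> {j \<in> J. S j < S i}. w j)"

lemma mass_below_cong:
  "(\<And>j. j \<in> insert i J \<Longrightarrow> S j = S' j) \<Longrightarrow> mass_below w J S i = mass_below w J S' i"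
  unfolding mass_below_def by (intro sum.cong) auto

lemma mass_below_mono:
  assumes "finite J" "J' \<subseteq> J" "\<forall>j\<in>J. 0 \<le> w j"
  shows "mass_below w J' S i \<le> mass_below w J S i"
  unfolding mass_below_def using assms by (intro sum_mono2) auto

lemma mass_below_permute:
  assumes \<sigma>: "\<sigma> permutes D" and w: "\<And>k. k \<in> D \<Longrightarrow> w (\<sigma> k) = w k" and fin: "finite D"
  shows "mass_below w D (S \<circ> \<sigma>) j = mass_below w D S (\<sigma> j)"
proof -
  have "mass_below w D (S \<circ> \<sigma>) j = (\<Sum>k\<in>D. if S (\<sigma> k) < S (\<sigma> j) then w (\<sigma> k) else 0)"
    unfolding mass_below_def using fin w by (auto simp: sum.inter_filter intro!: sum.cong)
  also have "\<dots> = (\<Sum>k\<in>D. if S k < S (\<sigma> j) then w k else 0)"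
    using sum.reindex_bij_betw[OF permutes_imp_bij[OF \<sigma>]] .
  also have "\<dots> = mass_below w D S (\<sigma> j)"
    unfolding mass_below_def using fin by (simp add: sum.inter_filter)
  finally show ?thesis .
qed

lemma weighted_rank_mass_ge:
  fixes w S :: "'i \<Rightarrow> real"
  assumes fin: "finite D" and nonneg: "\<forall>j\<in>D. 0 \<le> w j" and c: "c \<le> sum w D"
  shows "c \<le> sum w {j \<in> D. mass_below w D S j < c}"
proof (cases "{j \<in> D. c \<le> mass_below w D S j} = {}")
  case True
  then have "{j \<in> D. mass_below w D S j < c} = D" by (auto simp: not_le)
  then show ?thesis using c by simp
next
  case False
  let ?G = "{j \<in> D. mass_below w D S j < c}"
  \<comment> \<open>a violator of least score has only non-violators strictly below it\<close>
  obtain j0 where j0: "j0 \<in> D" "c \<le> mass_below w D S j0"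
    and least: "\<And>k. k \<in> D \<Longrightarrow> c \<le> mass_below w D S k \<Longrightarrow> S j0 \<le> S k"
    using arg_min_least[OF _ False, where f = S] arg_min_if_finite(1)[OF _ False, where f = S] fin
    by auto
  have "{k \<in> D. S k < S j0} \<subseteq> ?G"
    using least by fastforce
  then have "mass_below w D S j0 \<le> sum w ?G"
    unfolding mass_below_def using fin nonneg by (intro sum_mono2) auto
  then show ?thesis using j0 by simp
qed

lemma borel_measurable_mass_below:
  assumes "finite J" and [measurable]: "\<And>j. j \<in> insert i J \<Longrightarrow> (\<lambda>y. S y j) \<in> borel_measurable N"
  shows "(\<lambda>y. mass_below w J (S y) i) \<in> borel_measurable N"
proof -
  have "(\<lambda>y. \<Sum>j\<in>J. if S y j < S y i then w j else 0) \<in> borel_measurable N"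
    by (intro borel_measurable_sum) measurable
  then show ?thesis
    unfolding mass_below_def using \<open>finite J\<close> by (simp add: sum.inter_filter)
qed

lemma weighted_rank_prob_ge:
  assumes P: "prob_space P" and fin: "finite D" and nonneg: "\<forall>j\<in>D. 0 \<le> w j" and c: "c \<le> sum w D"
    and S_meas: "\<And>j. j \<in> D \<Longrightarrow> (\<lambda>y. S y j) \<in> borel_measurable P"
  shows "c \<le> (\<Sum>j\<in>D. w j * (\<integral>y. of_bool (mass_below w D (S y) j < c) \<partial>P))"
proof -
  interpret prob_space P by (rule P)
  have int: "integrable P (\<lambda>y. of_bool (mass_below w D (S y) j < c) :: real)" if "j \<in> D" for j
  proof -
    have [measurable]: "(\<lambda>y. mass_below w D (S y) j) \<in> borel_measurable P"
      using that fin S_meas by (intro borel_measurable_mass_below) auto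
    show ?thesis by (intro integrable_const_bound[where B=1]) auto
  qed
  have "c \<le> (\<integral>y. (\<Sum>j\<in>D. w j * of_bool (mass_below w D (S y) j < c)) \<partial>P)"
  proof (rule integral_ge_const)
    show "AE y in P. c \<le> (\<Sum>j\<in>D. w j * of_bool (mass_below w D (S y) j < c))"
      using weighted_rank_mass_ge[OF fin nonneg c] fin
      by (simp add: sum.inter_filter of_bool_def if_distrib cong: if_cong)
  qed (use int in auto)
  also have "\<dots> = (\<Sum>j\<in>D. w j * (\<integral>y. of_bool (mass_below w D (S y) j < c) \<partial>P))"
    using int by (simp add: Bochner_Integration.integral_sum)
  finally show ?thesis .
qed

definition qweight :: "(nat \<Rightarrow> 'x) \<Rightarrow> (nat \<Rightarrow> bool) \<Rightarrow> nat set \<Rightarrow> nat \<Rightarrow> real" where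
  "qweight x a D j = real (n0 a (blk x D j)) / (real (n0 a D) * real (card (blk x D j)))"

lemma qweight_nonneg: "0 \<le> qweight x a D j"
  unfolding qweight_def by simp

lemma qweight_cong: "x k = x l \<Longrightarrow> qweight x a D k = qweight x a D l"
  unfolding qweight_def blk_def by simp

lemma blk_eq: "x i = x j \<Longrightarrow> blk x D i = blk x D j"
  unfolding blk_def by simp

lemma card_blk_eq_sum: "finite D \<Longrightarrow> real (card (blk x D i)) = (\<Sum>j\<in>D. of_bool (x j = x i))"
  unfolding blk_def by (simp add: Collect_conj_eq)

lemma n0_blk_eq_sum:
  "finite D \<Longrightarrow> real (n0 a (blk x D j)) = (\<Sum>i\<in>{i \<in> D. \<not> a i}. of_bool (x i = x j))"
  unfolding n0_def blk_def by (simp add: Collect_conj_eq Int_ac)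

lemma n0_times_sum_qweight:
  assumes fin: "finite D" and const: "\<And>i j. i \<in> D \<Longrightarrow> j \<in> D \<Longrightarrow> x i = x j \<Longrightarrow> f i = f j"
  shows "real (n0 a D) * (\<Sum>j\<in>D. qweight x a D j * f j) = (\<Sum>i \<in> {i \<in> D. \<not> a i}. f i)"
proof (cases "n0 a D = 0")
  case True
  then have no_missing: "{i \<in> D. \<not> a i} = {}" using fin by (simp add: n0_def)
  show ?thesis unfolding no_missing using True by simp
next
  case False
  have blk_pos: "0 < card (blk x D i)" if "i \<in> D" for i
    using fin that by (subst card_gt_0_iff) (auto simp: blk_def)
  have "real (n0 a D) * (\<Sum>j\<in>D. qweight x a D j * f j)
      = (\<Sum>j\<in>D. real (n0 a (blk x D j)) * f j / real (card (blk x D j)))"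
    using False by (simp add: sum_distrib_left qweight_def)
  also have "\<dots> = (\<Sum>j\<in>D. \<Sum>i\<in>{i \<in> D. \<not> a i}. of_bool (x i = x j) * f j / real (card (blk x D j)))"
    by (simp only: n0_blk_eq_sum[OF fin] sum_distrib_right sum_divide_distrib)
  also have "\<dots> = (\<Sum>j\<in>D. \<Sum>i\<in>{i \<in> D. \<not> a i}. of_bool (x j = x i) * f i / real (card (blk x D i)))"
  proof (intro sum.cong refl)
    fix j i assume "j \<in> D" "i \<in> {i \<in> D. \<not> a i}"
    then show "of_bool (x i = x j) * f j / real (card (blk x D j))
        = of_bool (x j = x i) * f i / real (card (blk x D i))"
      by (cases "x i = x j") (simp_all add: const[of i j] blk_eq[of x i j D])
  qed
  also have "\<dots> = (\<Sum>i\<in>{i \<in> D. \<not> a i}. \<Sum>j\<in>D. of_bool (x j = x i) * f i / real (card (blk x D i)))"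
    by (rule sum.swap)
  also have "\<dots> = (\<Sum>i\<in>{i \<in> D. \<not> a i}. f i)"
  proof (intro sum.cong refl)
    fix i assume "i \<in> {i \<in> D. \<not> a i}"
    then have "real (card (blk x D i)) \<noteq> 0" using blk_pos by simp
    then show "(\<Sum>j\<in>D. of_bool (x j = x i) * f i / real (card (blk x D i))) = f i"
      by (simp only: sum_divide_distrib[symmetric] sum_distrib_right[symmetric] card_blk_eq_sum[OF fin, symmetric]) simp
  qed
  finally show ?thesis .
qed

lemma sum_qweight:
  assumes "finite D" "n0 a D \<noteq> 0"
  shows "(\<Sum>j\<in>D. qweight x a D j) = 1"
proof -
  have "real (n0 a D) * (\<Sum>j\<in>D. qweight x a D j) = real (n0 a D)"
    using n0_times_sum_qweight[OF assms(1), of x "\<lambda>_. 1" a] by (simp add: n0_def)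
  then show ?thesis using assms(2) by simp
qed

lemma ereal_le_qhat_iff:
  fixes S :: "nat \<Rightarrow> real"
  assumes fin: "finite D" and alpha: "\<alpha> < 1"
  shows "ereal r \<le> qhat \<alpha> x a S D \<longleftrightarrow>
    (\<Sum>j \<in> {j \<in> D. a j \<and> S j < r}. qweight x a D j) < 1 - \<alpha>"
proof -
  define G where "G t = (\<Sum>i \<in> {i \<in> D. a i \<and> ereal (S i) \<le> t}.
          real (n0 a (blk x D i)) / (real (n0 a D) * real (card (blk x D i))))
    + (if (\<infinity> :: ereal) \<le> t
       then (1 / real (n0 a D)) * (\<Sum>B \<in> blocks x D. real (n0 a B) ^ 2 / real (card B))
       else 0)" for t
  have qhat_eq: "qhat \<alpha> x a S D = Inf {t. 1 - \<alpha> \<le> G t}"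
    unfolding qhat_def G_def ..
  have G_finite: "G t = (\<Sum>i \<in> {i \<in> D. a i \<and> ereal (S i) \<le> t}. qweight x a D i)" if "t \<noteq> \<infinity>" for t
    using that unfolding G_def qweight_def by simp
  let ?below = "\<lambda>r. {j \<in> D. a j \<and> S j < r}"
  show ?thesis
  proof
    assume r_le: "ereal r \<le> qhat \<alpha> x a S D"
    show "sum (qweight x a D) (?below r) < 1 - \<alpha>"
    proof (rule ccontr)
      assume "\<not> ?thesis"
      then have mass: "1 - \<alpha> \<le> sum (qweight x a D) (?below r)" by simp
      have ne: "?below r \<noteq> {}"
      proof
        assume "?below r = {}"
        with mass alpha show False by simp
      qed
      define m where "m = Max (S ` ?below r)"
      have "m < r" unfolding m_def using fin ne by (subst Max_less_iff) auto
      have "sum (qweight x a D) (?below r) \<le> (\<Sum>i \<in> {i \<in> D. a i \<and> ereal (S i) \<le> ereal m}. qweight x a D i)"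
        using fin unfolding m_def by (intro sum_mono2) (auto simp: qweight_nonneg)
      then have "1 - \<alpha> \<le> G (ereal m)" using mass G_finite by simp
      then have "qhat \<alpha> x a S D \<le> ereal m" unfolding qhat_eq by (intro Inf_lower) simp
      with r_le have "ereal r \<le> ereal m" by (rule order.trans)
      with \<open>m < r\<close> show False by simp
    qed
  next
    assume mass: "sum (qweight x a D) (?below r) < 1 - \<alpha>"
    show "ereal r \<le> qhat \<alpha> x a S D"
      unfolding qhat_eq
    proof (rule Inf_greatest, rule ccontr)
      fix t assume "t \<in> {t. 1 - \<alpha> \<le> G t}" and "\<not> ereal r \<le> t"
      then have t: "1 - \<alpha> \<le> G t" and "t < ereal r" by auto
      then have "t \<noteq> \<infinity>" by auto
      have "{i \<in> D. a i \<and> ereal (S i) \<le> t} \<subseteq> ?below r"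
        using \<open>t < ereal r\<close> by (auto dest: order.strict_trans1)
      then have "G t \<le> sum (qweight x a D) (?below r)"
        unfolding G_finite[OF \<open>t \<noteq> \<infinity>\<close>] using fin by (intro sum_mono2) (auto simp: qweight_nonneg)
      with t mass show False by simp
    qed
  qed
qed

lemma indicator_Chat:
  assumes "finite D" "\<alpha> < 1"
  shows "indicator (Chat \<alpha> s x a y D (x i)) (y i) =
    (of_bool (mass_below (qweight x a D) {j \<in> D. a j} (\<lambda>j. s (x j) (y j)) i < 1 - \<alpha>) :: real)"
  unfolding indicator_def Chat_def mass_below_def
  using ereal_le_qhat_iff[OF assms, where r = "s (x i) (y i)" and S = "\<lambda>j. s (x j) (y j)"
      and x = x and a = a]
  by (simp add: conj_ac)

lemma transpose_image_blocks:
  assumes "i \<in> A" "j \<in> A" "x i = x j" "B \<in> blocks x A"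
  shows "Transposition.transpose i j ` B = B"
  using assms by (intro transpose_image_eq) (auto simp: blocks_def blk_def)

lemma part_of_eq:
  assumes "partition_on A U" "B \<in> U" "i \<in> B"
  shows "part_of U i = B"
  unfolding part_of_def
proof (rule the_equality)
  show "B \<in> U \<and> i \<in> B" using assms by simp
  fix C assume "C \<in> U \<and> i \<in> C"
  then show "C = B" using assms unfolding partition_on_def disjoint_def by blast
qed

lemma sum_part_of:
  assumes U: "partition_on A U" and fin: "finite A"
  shows "(\<Sum>i \<in> {i \<in> A. p i}. h (part_of U i) i) = (\<Sum>B\<in>U. \<Sum>i \<in> {i \<in> B. p i}. h B i)"
proof -
  have A: "{i \<in> A. p i} = (\<Union>B\<in>U. {i \<in> B. p i})"
    using partition_onD1[OF U] by auto
  have disj: "disjoint_family_on (\<lambda>B. {i \<in> B. p i}) U"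
    using partition_onD2[OF U] by (auto simp: disjoint_family_on_def disjoint_def)
  have fin_parts: "\<forall>B\<in>U. finite {i \<in> B. p i}"
    using partition_onD1[OF U] fin by (auto intro: finite_subset)
  have "(\<Sum>i \<in> {i \<in> A. p i}. h (part_of U i) i) = (\<Sum>B\<in>U. \<Sum>i \<in> {i \<in> B. p i}. h (part_of U i) i)"
    unfolding A by (rule sum.UNION_disjoint_family[OF finite_elements[OF fin U] fin_parts disj])
  also have "\<dots> = (\<Sum>B\<in>U. \<Sum>i \<in> {i \<in> B. p i}. h B i)"
    using part_of_eq[OF U] by (intro sum.cong) auto
  finally show ?thesis .
qed

locale block_exchangeable_scores = prob_space P
  for P :: "(nat \<Rightarrow> 'y) measure" and n :: nat and M :: "'y measure"
    and x :: "nat \<Rightarrow> 'x" and s :: "'x \<Rightarrow> 'y \<Rightarrow> real" +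
  assumes s_meas: "\<And>x0. s x0 \<in> borel_measurable M"
    and P_sets: "sets P = sets (PiM {..<n} (\<lambda>_. M))"
    and exch: "\<And>\<sigma>. \<sigma> permutes {..<n} \<Longrightarrow> (\<forall>B \<in> blocks x {..<n}. \<sigma> ` B = B) \<Longrightarrow>
        distr P (PiM {..<n} (\<lambda>_. M)) (\<lambda>y. \<lambda>i\<in>{..<n}. y (\<sigma> i)) = P"
begin

lemma borel_measurable_score:
  "k < n \<Longrightarrow> (\<lambda>y. s (x k) (y k)) \<in> borel_measurable P"
  unfolding measurable_cong_sets[OF P_sets refl]
  using measurable_comp[OF measurable_component_singleton[of k "{..<n}" "\<lambda>_. M"] s_meas]
  by (simp add: comp_def)

lemma borel_measurable_mass_below_less:
  assumes "J \<subseteq> {..<n}" "i < n"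
  shows "(\<lambda>y. of_bool (mass_below w J (\<lambda>k. s (x k) (y k)) i < c) :: real) \<in> borel_measurable P"
proof -
  have "finite J" using assms(1) finite_subset by blast
  then have [measurable]: "(\<lambda>y. mass_below w J (\<lambda>k. s (x k) (y k)) i) \<in> borel_measurable P"
    using assms by (intro borel_measurable_mass_below borel_measurable_score) auto
  show ?thesis by measurable
qed

lemma integrable_mass_below_less:
  "J \<subseteq> {..<n} \<Longrightarrow> i < n \<Longrightarrow>
    integrable P (\<lambda>y. of_bool (mass_below w J (\<lambda>k. s (x k) (y k)) i < c) :: real)"
  by (intro integrable_const_bound[where B = 1] borel_measurable_mass_below_less) auto

lemma integral_transpose_eq:
  fixes g :: "(nat \<Rightarrow> 'y) \<Rightarrow> 'b::{banach, second_countable_topology}"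
  assumes ij: "i < n" "j < n" "x i = x j" and g: "g \<in> borel_measurable P"
  shows "(\<integral>y. g (\<lambda>k\<in>{..<n}. y (Transposition.transpose i j k)) \<partial>P) = (\<integral>y. g y \<partial>P)"
proof -
  let ?\<sigma> = "Transposition.transpose i j"
  let ?T = "\<lambda>y. \<lambda>k\<in>{..<n}. y (?\<sigma> k)"
  have \<sigma>: "?\<sigma> permutes {..<n}" using ij by (intro permutes_swap_id) auto
  have "?T \<in> measurable (PiM {..<n} (\<lambda>_. M)) (PiM {..<n} (\<lambda>_. M))"
  proof (rule measurable_restrict)
    fix k assume "k \<in> {..<n}"
    then show "(\<lambda>y. y (?\<sigma> k)) \<in> measurable (PiM {..<n} (\<lambda>_. M)) M"
      using permutes_in_image[OF \<sigma>] by (intro measurable_component_singleton) simp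
  qed
  then have T: "?T \<in> measurable P (PiM {..<n} (\<lambda>_. M))"
    unfolding measurable_cong_sets[OF P_sets refl] .
  have blocks: "\<forall>B \<in> blocks x {..<n}. ?\<sigma> ` B = B"
    using ij by (intro ballI transpose_image_blocks) auto
  have "(\<integral>y. g (?T y) \<partial>P) = (\<integral>y. g y \<partial>distr P (PiM {..<n} (\<lambda>_. M)) ?T)"
    using g unfolding measurable_cong_sets[OF P_sets refl] by (rule integral_distr[OF T, symmetric])
  also have "\<dots> = (\<integral>y. g y \<partial>P)"
    unfolding exch[OF \<sigma> blocks] ..
  finally show ?thesis .
qed

lemma integral_full_coverage_eq:
  assumes D: "D \<subseteq> {..<n}" and ij: "i \<in> D" "j \<in> D" "x i = x j"
  shows "(\<integral>y. of_bool (mass_below (qweight x a D) D (\<lambda>k. s (x k) (y k)) j < c) \<partial>P)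
       = (\<integral>y. of_bool (mass_below (qweight x a D) D (\<lambda>k. s (x k) (y k)) i < c) \<partial>P :: real)"
proof -
  let ?w = "qweight x a D"
  let ?\<sigma> = "Transposition.transpose i j"
  define g where "g y = (of_bool (mass_below ?w D (\<lambda>k. s (x k) (y k)) i < c) :: real)" for y
  have fin: "finite D" using D finite_subset by blast
  have x_\<sigma>: "x (?\<sigma> k) = x k" for k
    using ij by (simp add: Transposition.transpose_def)
  have \<sigma>: "?\<sigma> permutes D" using ij by (intro permutes_swap_id)
  have w_\<sigma>: "?w (?\<sigma> k) = ?w k" for k by (rule qweight_cong) (rule x_\<sigma>)
  have "mass_below ?w D (\<lambda>k. s (x k) ((\<lambda>k\<in>{..<n}. y (?\<sigma> k)) k)) i
      = mass_below ?w D ((\<lambda>k. s (x k) (y k)) \<circ> ?\<sigma>) i" for y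
    using D ij by (intro mass_below_cong) (auto simp: x_\<sigma>)
  also have "mass_below ?w D ((\<lambda>k. s (x k) (y k)) \<circ> ?\<sigma>) i = mass_below ?w D (\<lambda>k. s (x k) (y k)) j" for y
    using mass_below_permute[where w = ?w, OF \<sigma> w_\<sigma> fin] by simp
  finally have "g (\<lambda>k\<in>{..<n}. y (?\<sigma> k)) = of_bool (mass_below ?w D (\<lambda>k. s (x k) (y k)) j < c)" for y
    unfolding g_def by simp
  moreover have "g \<in> borel_measurable P"
    unfolding g_def using D ij by (intro borel_measurable_mass_below_less) auto
  ultimately show ?thesis
    using integral_transpose_eq[of i j g] D ij unfolding g_def by auto
qed

lemma sum_coverage_Chat_ge:
  assumes alpha: "0 \<le> \<alpha>" "\<alpha> < 1" and D: "D \<subseteq> {..<n}"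
  shows "(1 - \<alpha>) * real (n0 a D)
    \<le> (\<Sum>i \<in> {i \<in> D. \<not> a i}. \<integral>y. indicator (Chat \<alpha> s x a y D (x i)) (y i) \<partial>P)"
proof (cases "n0 a D = 0")
  case True
  then show ?thesis by (auto intro!: sum_nonneg Bochner_Integration.integral_nonneg)
next
  case False
  let ?w = "qweight x a D"
  \<comment> \<open>coverage of j if the responses of all of D were observed\<close>
  define full_cover where
    "full_cover j = (\<integral>y. of_bool (mass_below ?w D (\<lambda>k. s (x k) (y k)) j < 1 - \<alpha>) \<partial>P :: real)" for j
  have fin: "finite D" using D finite_subset by blast
  have rank: "1 - \<alpha> \<le> (\<Sum>j\<in>D. ?w j * full_cover j)"
    unfolding full_cover_def using sum_qweight[OF fin False, where x = x] alpha D
    by (intro weighted_rank_prob_ge[OF prob_space_axioms fin] borel_measurable_score)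
      (auto simp: qweight_nonneg)
  have "(1 - \<alpha>) * real (n0 a D) \<le> real (n0 a D) * (\<Sum>j\<in>D. ?w j * full_cover j)"
    using mult_right_mono[OF rank, of "real (n0 a D)"] by (simp add: mult.commute)
  also have "\<dots> = (\<Sum>i \<in> {i \<in> D. \<not> a i}. full_cover i)"
  proof (rule n0_times_sum_qweight[OF fin])
    fix i j assume "i \<in> D" "j \<in> D" "x i = x j"
    then show "full_cover i = full_cover j"
      unfolding full_cover_def by (intro integral_full_coverage_eq[OF D]) simp_all
  qed
  also have "\<dots> \<le> (\<Sum>i \<in> {i \<in> D. \<not> a i}. \<integral>y. indicator (Chat \<alpha> s x a y D (x i)) (y i) \<partial>P)"
  proof (rule sum_mono)
    fix i assume i: "i \<in> {i \<in> D. \<not> a i}"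
    have "mass_below ?w {j \<in> D. a j} (\<lambda>k. s (x k) (y k)) i \<le> mass_below ?w D (\<lambda>k. s (x k) (y k)) i"
      for y using fin by (intro mass_below_mono) (auto simp: qweight_nonneg)
    then have "(of_bool (mass_below ?w D (\<lambda>k. s (x k) (y k)) i < 1 - \<alpha>) :: real)
        \<le> of_bool (mass_below ?w {j \<in> D. a j} (\<lambda>k. s (x k) (y k)) i < 1 - \<alpha>)" for y
      by (auto intro: order.strict_trans1)
    then show "full_cover i \<le> (\<integral>y. indicator (Chat \<alpha> s x a y D (x i)) (y i) \<partial>P)"
      unfolding full_cover_def indicator_Chat[OF fin alpha(2)]
      using i D by (intro integral_mono integrable_mass_below_less) auto
  qed
  finally show ?thesis .
qed

lemma integral_coverU_ge:
  assumes alpha: "0 \<le> \<alpha>" "\<alpha> < 1" and U: "partition_on {..<n} U"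
  shows "1 - \<alpha> \<le> (\<integral>y. coverU \<alpha> s n x a U y \<partial>P)"
proof (cases "n0 a {..<n} = 0")
  case True
  then show ?thesis using alpha by (simp add: coverU_def prob_space)
next
  case False
  let ?O = "{j \<in> {..<n}. a j}"
  let ?N = "real (n0 a {..<n})"
  define cov where "cov B i y = (indicator (Chat \<alpha> s x a y (B \<union> ?O) (x i)) (y i) :: real)" for B i y
  have sub: "B \<union> ?O \<subseteq> {..<n}" if "B \<in> U" for B
    using partition_onD1[OF U] that by auto
  have missing_eq: "{i \<in> B \<union> ?O. \<not> a i} = {i \<in> B. \<not> a i}" for B
    by auto
  have int: "integrable P (cov B i)" if "B \<in> U" "i < n" for B i
  proof -
    have fin: "finite (B \<union> ?O)" using sub[OF \<open>B \<in> U\<close>] finite_subset by blast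
    show ?thesis unfolding cov_def[abs_def] indicator_Chat[OF fin alpha(2)]
      using sub that by (intro integrable_mass_below_less) auto
  qed
  have "(1 - \<alpha>) * ?N = (\<Sum>B\<in>U. (1 - \<alpha>) * real (n0 a (B \<union> ?O)))"
    using sum_part_of[OF U, where p = "\<lambda>i. \<not> a i" and h = "\<lambda>_ _. 1 - \<alpha>"]
    unfolding n0_def missing_eq by (simp add: mult.commute)
  also have "\<dots> \<le> (\<Sum>B\<in>U. \<Sum>i \<in> {i \<in> B \<union> ?O. \<not> a i}. \<integral>y. cov B i y \<partial>P)"
    unfolding cov_def using sub by (intro sum_mono sum_coverage_Chat_ge[OF alpha])
  also have "\<dots> = (\<Sum>i \<in> {i \<in> {..<n}. \<not> a i}. \<integral>y. cov (part_of U i) i y \<partial>P)"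
    using sum_part_of[OF U, where p = "\<lambda>i. \<not> a i" and h = "\<lambda>B i. \<integral>y. cov B i y \<partial>P"]
    unfolding missing_eq by simp
  also have "\<dots> = (\<integral>y. (\<Sum>i \<in> {i \<in> {..<n}. \<not> a i}. cov (part_of U i) i y) \<partial>P)"
    using int partition_onD1[OF U] part_of_eq[OF U]
    by (intro Bochner_Integration.integral_sum[symmetric]) blast
  also have "\<dots> = ?N * (\<integral>y. coverU \<alpha> s n x a U y \<partial>P)"
    using False by (simp add: coverU_def ChatU_def cov_def)
  finally show ?thesis using False by simp
qed

end

theorem corollary1:
  fixes n :: nat and \<alpha> :: real
    and x :: "nat \<Rightarrow> 'x" and a :: "nat \<Rightarrow> bool"
    and M :: "'y measure" and s :: "'x \<Rightarrow> 'y \<Rightarrow> real"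
    and P :: "(nat \<Rightarrow> 'y) measure"
    and Q :: "nat set set pmf"
  assumes alpha: "0 < \<alpha>" "\<alpha> < 1"
    and s_meas: "\<And>x0. s x0 \<in> borel_measurable M"
    and P_prob: "prob_space P"
    and P_sets: "sets P = sets (PiM {..<n} (\<lambda>_. M))"
    and exch: "\<And>\<sigma>. \<sigma> permutes {..<n} \<Longrightarrow> (\<forall>B \<in> blocks x {..<n}. \<sigma> ` B = B) \<Longrightarrow>
        distr P (PiM {..<n} (\<lambda>_. M)) (\<lambda>y. \<lambda>i\<in>{..<n}. y (\<sigma> i)) = P"
    and Q_part: "\<And>U. U \<in> set_pmf Q \<Longrightarrow> partition_on {..<n} U"
  shows "measure_pmf.expectation Q (\<lambda>U. \<integral>y. coverU \<alpha> s n x a U y \<partial>P) \<ge> 1 - \<alpha>"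
proof (rule measure_pmf.integral_ge_const)
  interpret block_exchangeable_scores P n M x s
    using P_prob s_meas P_sets exch
    by (simp add: block_exchangeable_scores_def block_exchangeable_scores_axioms_def)
  have "finite (set_pmf Q)"
    using Q_part by (intro finite_subset[OF _ finitely_many_partition_on[of "{..<n}"]]) auto
  then show "integrable (measure_pmf Q) (\<lambda>U. \<integral>y. coverU \<alpha> s n x a U y \<partial>P)"
    by (rule integrable_measure_pmf_finite)
  show "AE U in measure_pmf Q. 1 - \<alpha> \<le> (\<integral>y. coverU \<alpha> s n x a U y \<partial>P)"
    using alpha by (intro AE_pmfI integral_coverU_ge Q_part) auto
qed

end
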